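(* If $k>\ell\geq t+2$ and $n\geq\max\{2L(k,t),\ t+1+(k-t)(\ell-t)\}$, then $r_1(n,k,\ell,t)>r_1(n,\ell,k,t)$.
   Context: $S(n,k)$ is the Stirling number of the second kind, with $S(n,a)=0$ for $a\leq0$. $L(k,t)=(t+1)+(k-t+1)\log_2((t+1)(k-t+1))$. $r_1(n,k,\ell,t)=\Big(\sum_{j=1}^{\ell-t}(-1)^{j-1}\binom{\ell-t}{j}S(n-t-j,k-t-j)\Big)\big(S(n-t,\ell-t)+t\big)$. *)

theory Defs
  imports "HOL-Combinatorics.Stirling" Complex_Main
begin

definition S :: "int \<Rightarrow> int \<Rightarrow> int" where
  "S n a = (if a \<le> 0 \<or> n < 0 then 0 else int (Stirling (nat n) (nat a)))"

definition L :: "nat \<Rightarrow> nat \<Rightarrow> real" where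
  "L k t = real (t + 1) + (real k - real t + 1) * log 2 ((real t + 1) * (real k - real t + 1))"

definition r1 :: "nat \<Rightarrow> nat \<Rightarrow> nat \<Rightarrow> nat \<Rightarrow> int" where
  "r1 n k l t =
     (\<Sum>j\<in>{1..l - t}. (-1) ^ (j - 1) * int ((l - t) choose j)
        * S (int n - int t - int j) (int k - int t - int j))
     * (S (int n - int t) (int l - int t) + int t)"

end

theory Submission
  imports Defs
begin

text \<open>Write \<open>a = k - t\<close>, \<open>b = l - t\<close>, \<open>m = n - t\<close>. Each value of \<^const>\<open>r1\<close> is an
  inclusion-exclusion sum of Stirling numbers times \<open>S(m,\<cdot>) + t\<close>, and these sums obey
  Bonferroni-type bounds: the one in \<open>r1 n k l t\<close> is at least
  \<open>b S(m-1,a-1) - (b choose 2) S(m-2,a-2)\<close>, the one in \<open>r1 n l k t\<close> at most \<open>a S(m-1,b-1)\<close>.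
  Since \<open>c! S(N,c) = c^N (1 - O(c (1 - 1/c)^N))\<close>, the hypothesis \<open>n \<ge> 2 L(k,t)\<close> makes all
  error terms small and \<open>t\<close> negligible next to \<open>a^m / a!\<close>, so the comparison reduces to
  \<open>(b/a) ((a-1) b / (a (b-1)))^(m-1) \<ge> 9/5\<close>, which Bernoulli's inequality gives because
  \<open>m - 1 \<ge> a b\<close> and \<open>a > b\<close>.\<close>

section \<open>Stirling numbers on the integers and their diagonal differences\<close>

text \<open>Unlike \<^const>\<open>S\<close>, this extension keeps \<open>Stirling 0 0 = 1\<close>, so the
  recurrence holds for every \<open>n \<ge> 1\<close>; the two agree whenever \<open>n \<noteq> 0\<close>.\<close>
definition Stirling_int :: "int \<Rightarrow> int \<Rightarrow> int" where
  "Stirling_int n c = (if n < 0 \<or> c < 0 then 0 else int (Stirling (nat n) (nat c)))"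

lemma Stirling_int_nonneg: "0 \<le> Stirling_int n c"
  by (simp add: Stirling_int_def)

lemma Stirling_int_neg_right: "c < 0 \<Longrightarrow> Stirling_int n c = 0"
  by (simp add: Stirling_int_def)

lemma Stirling_int_of_nat [simp]: "Stirling_int (int n) (int c) = int (Stirling n c)"
  by (simp add: Stirling_int_def)

lemma Stirling_int_diff:
  "j \<le> n \<Longrightarrow> j \<le> c \<Longrightarrow> Stirling_int (int n - int j) (int c - int j) = int (Stirling (n - j) (c - j))"
  by (metis Stirling_int_of_nat of_nat_diff)

lemma S_eq_Stirling_int: "n \<noteq> 0 \<Longrightarrow> S n c = Stirling_int n c"
  by (cases "nat n"; cases "nat c") (auto simp: S_def Stirling_int_def)

lemma Stirling_int_rec:
  assumes "1 \<le> n"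
  shows "Stirling_int n c = c * Stirling_int (n - 1) c + Stirling_int (n - 1) (c - 1)"
proof -
  obtain n' where n: "n = int n' + 1"
    using assms by (intro that[of "nat (n - 1)"]) simp
  show ?thesis
  proof (cases "c \<le> 0")
    case True
    then show ?thesis
      by (cases "c = 0") (simp_all add: n Stirling_int_def nat_add_distrib)
  next
    case False
    then obtain c' where c: "c = int c' + 1"
      by (intro that[of "nat (c - 1)"]) simp
    then show ?thesis
      by (simp add: n c Stirling_int_def nat_add_distrib algebra_simps flip: Suc_eq_plus1)
  qed
qed

text \<open>By inclusion-exclusion, for \<open>b \<le> m\<close> this counts the partitions of an \<open>m\<close>-set into \<open>a\<close>
  blocks in which none of \<open>b\<close> given elements is a singleton; the nonnegativity below is
  proved from the recurrences instead.\<close>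
definition stirling_diff :: "nat \<Rightarrow> int \<Rightarrow> int \<Rightarrow> int" where
  "stirling_diff b m a = (\<Sum>j\<le>b. (-1) ^ j * int (b choose j) * Stirling_int (m - int j) (a - int j))"

lemma stirling_diff_0 [simp]: "stirling_diff 0 m a = Stirling_int m a"
  by (simp add: stirling_diff_def)

lemma stirling_diff_neg_right: "a < 0 \<Longrightarrow> stirling_diff b m a = 0"
  by (simp add: stirling_diff_def Stirling_int_neg_right)

lemma stirling_diff_Suc:
  "stirling_diff (Suc b) m a = stirling_diff b m a - stirling_diff b (m - 1) (a - 1)"
proof -
  define f where "f j = Stirling_int (m - int j) (a - int j)" for j
  have shift: "f (Suc j) = Stirling_int (m - 1 - int j) (a - 1 - int j)" for j
    by (simp add: f_def algebra_simps)
  have "stirling_diff (Suc b) m a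
      = f 0 + (\<Sum>j\<le>b. (-1) ^ Suc j * int (b choose Suc j) * f (Suc j))
        + (\<Sum>j\<le>b. (-1) ^ Suc j * int (b choose j) * f (Suc j))"
    unfolding stirling_diff_def f_def[symmetric]
    by (subst sum.atMost_Suc_shift) (simp add: algebra_simps flip: sum.distrib)
  also have "f 0 + (\<Sum>j\<le>b. (-1) ^ Suc j * int (b choose Suc j) * f (Suc j))
      = (\<Sum>j\<le>Suc b. (-1) ^ j * int (b choose j) * f j)"
    by (subst sum.atMost_Suc_shift) simp
  also have "\<dots> = stirling_diff b m a"
    by (simp add: stirling_diff_def f_def)
  also have "(\<Sum>j\<le>b. (-1) ^ Suc j * int (b choose j) * f (Suc j)) = - stirling_diff b (m - 1) (a - 1)"
    by (simp add: stirling_diff_def shift sum_negf[symmetric])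
  finally show ?thesis by simp
qed

lemma stirling_diff_rec:
  "int b < m \<Longrightarrow> stirling_diff b m a
     = a * stirling_diff b (m - 1) a + stirling_diff b (m - 1) (a - 1)
       + int b * stirling_diff (b - 1) (m - 2) (a - 1)"
proof (induction b arbitrary: m a)
  case 0
  then show ?case
    using Stirling_int_rec[of m a] by simp
next
  case (Suc b)
  let ?D = stirling_diff
  have IH1: "?D b m a = a * ?D b (m - 1) a + ?D b (m - 1) (a - 1) + int b * ?D (b - 1) (m - 2) (a - 1)"
    using Suc by simp
  have IH2: "?D b (m - 1) (a - 1) = (a - 1) * ?D b (m - 2) (a - 1) + ?D b (m - 2) (a - 2)
      + int b * ?D (b - 1) (m - 3) (a - 2)"
    using Suc.IH[of "m - 1" "a - 1"] Suc.prems by (simp add: algebra_simps)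
  have "int b * ?D (b - 1) (m - 2) (a - 1) - int b * ?D (b - 1) (m - 3) (a - 2) = int b * ?D b (m - 2) (a - 1)"
    by (cases b) (simp_all add: stirling_diff_Suc right_diff_distrib)
  moreover have "a * ?D (Suc b) (m - 1) a = a * ?D b (m - 1) a - a * ?D b (m - 2) (a - 1)"
    using stirling_diff_Suc[of b "m - 1" a] by (simp add: right_diff_distrib)
  moreover have "(a - 1) * ?D b (m - 2) (a - 1) = a * ?D b (m - 2) (a - 1) - ?D b (m - 2) (a - 1)"
    by (simp add: left_diff_distrib)
  moreover have "int (Suc b) * ?D (Suc b - 1) (m - 2) (a - 1) = int b * ?D b (m - 2) (a - 1) + ?D b (m - 2) (a - 1)"
    by (simp add: distrib_right)
  moreover have "?D (Suc b) (m - 1) (a - 1) = ?D b (m - 1) (a - 1) - ?D b (m - 2) (a - 2)"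
    using stirling_diff_Suc[of b "m - 1" "a - 1"] by (simp add: algebra_simps)
  ultimately show ?case
    using IH1 IH2 stirling_diff_Suc[of b m a] by linarith
qed

lemma stirling_diff_Suc_rec:
  "int b < m \<Longrightarrow> stirling_diff (Suc b) m a
     = a * stirling_diff b (m - 1) a + int b * stirling_diff (b - 1) (m - 2) (a - 1)"
  using stirling_diff_Suc[of b m a] stirling_diff_rec[of b m a] by simp

lemma stirling_diff_nonneg: "int b \<le> m \<Longrightarrow> 0 \<le> stirling_diff b m a"
proof (induction b arbitrary: m a rule: less_induct)
  case (less b)
  show ?case
  proof (cases b)
    case 0
    then show ?thesis by (simp add: Stirling_int_nonneg)
  next
    case (Suc b')
    show ?thesis
    proof (cases "a < 0")
      case True
      then show ?thesis by (simp add: stirling_diff_neg_right)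
    next
      case False
      have "0 \<le> stirling_diff b' (m - 1) a"
        using less.IH[of b' "m - 1" a] less.prems Suc by simp
      moreover have "0 \<le> int b' * stirling_diff (b' - 1) (m - 2) (a - 1)"
        using less.IH[of "b' - 1" "m - 2" "a - 1"] less.prems Suc by (cases b') simp_all
      ultimately show ?thesis
        using stirling_diff_Suc_rec[of b' m a] less.prems Suc False by simp
    qed
  qed
qed

lemma stirling_diff_le: "int b \<le> m \<Longrightarrow> stirling_diff b m a \<le> Stirling_int m a"
proof (induction b arbitrary: m a)
  case (Suc b)
  then have "int b \<le> m" "int b \<le> m - 1" by simp_all
  then show ?case
    using Suc.IH[of m a] stirling_diff_nonneg[of b "m - 1" "a - 1"] stirling_diff_Suc[of b m a]
    by linarith
qed simp

lemma stirling_diff_ge: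
  "int b \<le> m \<Longrightarrow> Stirling_int m a - int b * Stirling_int (m - 1) (a - 1) \<le> stirling_diff b m a"
proof (induction b arbitrary: m a)
  case (Suc b)
  then have "int b \<le> m" "int b \<le> m - 1" by simp_all
  then show ?case
    using Suc.IH[of m a] stirling_diff_le[of b "m - 1" "a - 1"] stirling_diff_Suc[of b m a]
    by (simp add: algebra_simps)
qed simp

definition stirling_alt_sum :: "nat \<Rightarrow> int \<Rightarrow> int \<Rightarrow> int" where
  "stirling_alt_sum b m a =
     (\<Sum>j\<in>{1..b}. (-1) ^ (j - 1) * int (b choose j) * Stirling_int (m - int j) (a - int j))"

lemma stirling_alt_sum_eq: "stirling_alt_sum b m a = Stirling_int m a - stirling_diff b m a"
proof -
  have "{..b} = insert 0 {1..b}" by auto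
  then have "stirling_diff b m a = Stirling_int m a
      + (\<Sum>j\<in>{1..b}. (-1) ^ j * int (b choose j) * Stirling_int (m - int j) (a - int j))"
    by (simp add: stirling_diff_def)
  also have "(\<Sum>j\<in>{1..b}. (-1) ^ j * int (b choose j) * Stirling_int (m - int j) (a - int j))
      = - stirling_alt_sum b m a"
    unfolding stirling_alt_sum_def sum_negf[symmetric]
    by (rule sum.cong) (auto simp: power_eq_if)
  finally show ?thesis by simp
qed

lemma stirling_alt_sum_eq_sum_diff:
  "stirling_alt_sum b m a = (\<Sum>i<b. stirling_diff i (m - 1) (a - 1))"
  by (induction b) (simp_all add: stirling_alt_sum_eq stirling_diff_Suc)

lemma stirling_alt_sum_nonneg: "int b \<le> m \<Longrightarrow> 0 \<le> stirling_alt_sum b m a"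
  unfolding stirling_alt_sum_eq_sum_diff by (rule sum_nonneg) (auto intro!: stirling_diff_nonneg)

lemma stirling_alt_sum_le:
  "int b \<le> m \<Longrightarrow> stirling_alt_sum b m a \<le> int b * Stirling_int (m - 1) (a - 1)"
proof -
  assume "int b \<le> m"
  then have "stirling_alt_sum b m a \<le> (\<Sum>i<b. Stirling_int (m - 1) (a - 1))"
    unfolding stirling_alt_sum_eq_sum_diff by (intro sum_mono stirling_diff_le) auto
  then show ?thesis by simp
qed

lemma sum_lessThan_eq_choose_two: "(\<Sum>i<b. i) = b choose 2"
  by (induction b) (simp_all add: numeral_2_eq_2)

lemma stirling_alt_sum_ge:
  "int b \<le> m \<Longrightarrow> int b * Stirling_int (m - 1) (a - 1) - int (b choose 2) * Stirling_int (m - 2) (a - 2)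
     \<le> stirling_alt_sum b m a"
proof -
  assume "int b \<le> m"
  then have "(\<Sum>i<b. Stirling_int (m - 1) (a - 1) - int i * Stirling_int (m - 2) (a - 2))
      \<le> stirling_alt_sum b m a"
    unfolding stirling_alt_sum_eq_sum_diff
    using stirling_diff_ge[of _ "m - 1" "a - 1"] by (intro sum_mono) (simp add: algebra_simps)
  then show ?thesis
    by (simp add: sum_subtractf sum_distrib_right flip: sum_lessThan_eq_choose_two)
qed

section \<open>Stirling numbers against powers\<close>

definition falling_fact :: "nat \<Rightarrow> nat \<Rightarrow> nat" where
  "falling_fact x k = (\<Prod>i<k. x - i)"

lemma falling_fact_0 [simp]: "falling_fact x 0 = 1"
  by (simp add: falling_fact_def)

lemma falling_fact_Suc: "falling_fact x (Suc k) = falling_fact x k * (x - k)"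
  by (simp add: falling_fact_def)

lemma falling_fact_Suc_shift: "falling_fact x (Suc k) = x * falling_fact (x - 1) k"
  unfolding falling_fact_def
  by (subst prod.lessThan_Suc_shift) (simp only: diff_zero diff_Suc_eq_diff_pred)

lemma falling_fact_eq_0: "x < k \<Longrightarrow> falling_fact x k = 0"
  unfolding falling_fact_def by (rule prod_zero) auto

lemma falling_fact_self: "falling_fact x x = fact x"
  by (induction x) (simp_all add: falling_fact_Suc_shift)

lemma mult_falling_fact: "x * falling_fact x k = falling_fact x (Suc k) + k * falling_fact x k"
proof (cases "k \<le> x")
  case True
  then have "x * falling_fact x k = (x - k) * falling_fact x k + k * falling_fact x k"
    by (simp flip: add_mult_distrib)
  then show ?thesis by (simp add: falling_fact_Suc)
qed (simp add: falling_fact_eq_0)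

lemma power_eq_sum_Stirling: "x ^ n = (\<Sum>k\<le>n. Stirling n k * falling_fact x k)"
proof (induction n)
  case (Suc n)
  have "x ^ Suc n = (\<Sum>k\<le>n. Stirling n k * (x * falling_fact x k))"
    using Suc by (simp add: sum_distrib_left algebra_simps)
  also have "\<dots> = (\<Sum>k\<le>n. Stirling n k * falling_fact x (Suc k)) + (\<Sum>k\<le>n. k * Stirling n k * falling_fact x k)"
    by (simp add: mult_falling_fact algebra_simps sum.distrib)
  also have "(\<Sum>k\<le>n. k * Stirling n k * falling_fact x k) = (\<Sum>k\<le>Suc n. k * Stirling n k * falling_fact x k)"
    by simp
  also have "\<dots> = (\<Sum>k\<le>n. Suc k * Stirling n (Suc k) * falling_fact x (Suc k))"
    by (subst sum.atMost_Suc_shift) simp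
  also have "(\<Sum>k\<le>n. Stirling n k * falling_fact x (Suc k)) + \<dots>
      = (\<Sum>k\<le>n. Stirling (Suc n) (Suc k) * falling_fact x (Suc k))"
    by (simp add: algebra_simps flip: sum.distrib)
  also have "\<dots> = (\<Sum>k\<le>Suc n. Stirling (Suc n) k * falling_fact x k)"
    by (subst sum.atMost_Suc_shift) simp
  finally show ?case .
qed simp

lemma falling_fact_le:
  assumes "1 \<le> c"
  shows "falling_fact c k \<le> c * falling_fact (c - 1) k + (if k = c then fact c else 0)"
proof (cases "c < k")
  case False
  then show ?thesis
  proof (cases k)
    case (Suc k')
    show ?thesis
    proof (cases "k = c")
      case False
      with \<open>\<not> c < k\<close> Suc have "falling_fact (c - 1) k' \<le> falling_fact (c - 1) k"
        by (auto simp: falling_fact_Suc)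
      with False show ?thesis
        by (simp add: Suc falling_fact_Suc_shift[of c])
    qed (simp add: falling_fact_self)
  qed simp
qed (simp add: falling_fact_eq_0)

lemma fact_mult_Stirling_le_power: "fact c * Stirling n c \<le> c ^ n"
proof (cases "c \<le> n")
  case True
  have "Stirling n c * falling_fact c c \<le> (\<Sum>k\<le>n. Stirling n k * falling_fact c k)"
    by (rule member_le_sum) (use True in auto)
  then show ?thesis
    by (simp add: power_eq_sum_Stirling falling_fact_self mult.commute)
qed simp

lemma power_le_fact_mult_Stirling:
  assumes "1 \<le> c"
  shows "c ^ n \<le> fact c * Stirling n c + c * (c - 1) ^ n"
proof -
  have "c ^ n \<le> (\<Sum>k\<le>n. Stirling n k * (c * falling_fact (c - 1) k + (if k = c then fact c else 0)))"
    unfolding power_eq_sum_Stirling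
    by (intro sum_mono mult_left_mono falling_fact_le assms) simp
  also have "\<dots> = c * (c - 1) ^ n + (\<Sum>k\<le>n. Stirling n k * (if k = c then fact c else 0))"
    by (simp add: power_eq_sum_Stirling algebra_simps sum.distrib sum_distrib_left)
  also have "(\<Sum>k\<le>n. Stirling n k * (if k = c then fact c else 0)) \<le> fact c * Stirling n c"
    by (cases "c \<le> n") (auto simp: if_distrib cong: if_cong)
  finally show ?thesis by simp
qed

lemma power_ratio_le_inverse_square:
  fixes c y :: real and N :: nat
  assumes "1 \<le> c" "0 < y" "2 * c * ln y \<le> N"
  shows "((c - 1) / c) ^ N \<le> 1 / y\<^sup>2"
proof -
  have "(c - 1) / c \<le> exp (- 1 / c)"
    using assms(1) exp_ge_add_one_self[of "- 1 / c"] by (simp add: field_simps)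
  then have "((c - 1) / c) ^ N \<le> exp (- 1 / c) ^ N"
    using assms(1) by (intro power_mono) simp_all
  also have "\<dots> = exp (- (N / c))"
    by (simp flip: exp_of_nat_mult)
  also have "\<dots> \<le> exp (- (2 * ln y))"
    using assms by (simp add: field_simps)
  also have "\<dots> = 1 / y\<^sup>2"
    using assms(2) exp_of_nat_mult[of 2 "ln y"] by (simp add: exp_minus inverse_eq_divide)
  finally show ?thesis .
qed

lemma Stirling_le_power_div_fact: "real (Stirling N c) \<le> real c ^ N / fact c"
proof -
  have "fact c * real (Stirling N c) \<le> real c ^ N"
    using fact_mult_Stirling_le_power[of c N] by (metis of_nat_fact of_nat_le_iff of_nat_mult of_nat_power)
  then show ?thesis
    by (simp add: le_divide_eq mult.commute)
qed

lemma Stirling_ge_power_div_fact: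
  fixes c N :: nat and y :: real
  assumes "1 \<le> c" "0 < y" "2 * c * ln y \<le> N"
  shows "(1 - c / y\<^sup>2) * (real c ^ N / fact c) \<le> Stirling N c"
proof -
  have "real c * (real c - 1) ^ N = real c ^ N * (c * ((real c - 1) / c) ^ N)"
    using assms(1) by (simp add: power_divide)
  also have "\<dots> \<le> real c ^ N * (c * (1 / y\<^sup>2))"
    using power_ratio_le_inverse_square[of c y N] assms by (intro mult_left_mono) simp_all
  finally have "real c ^ N * (1 - c / y\<^sup>2) \<le> real c ^ N - real c * (real c - 1) ^ N"
    by (simp add: algebra_simps)
  also have "\<dots> \<le> fact c * Stirling N c"
  proof -
    have "real (c ^ N) \<le> real (fact c * Stirling N c + c * (c - 1) ^ N)"
      using power_le_fact_mult_Stirling[OF assms(1)] by (simp only: of_nat_le_iff)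
    then show ?thesis
      using assms(1) by (simp add: of_nat_diff)
  qed
  finally show ?thesis
    by (simp add: divide_le_eq mult.commute)
qed

section \<open>The asymptotic comparison\<close>

lemma Stirling_ge_seven_eighths:
  fixes a c N :: nat
  assumes "1 \<le> c" "c < a" "2 * real c * ln (real a + 1) \<le> N"
  shows "7 / 8 * (real c ^ N / fact c) \<le> Stirling N c"
proof -
  have "8 * real c \<le> 8 * (real a - 1)"
    using assms(2) by simp
  also have "\<dots> \<le> (real a + 1)\<^sup>2"
    using zero_le_power2[of "real a - 3"] by (simp add: power2_eq_square algebra_simps)
  finally have "7 / 8 \<le> 1 - real c / (real a + 1)\<^sup>2"
    by (simp add: field_simps)
  then have "7 / 8 * (real c ^ N / fact c) \<le> (1 - real c / (real a + 1)\<^sup>2) * (real c ^ N / fact c)"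
    by (rule mult_right_mono) simp
  also have "\<dots> \<le> Stirling N c"
    using assms by (intro Stirling_ge_power_div_fact) simp_all
  finally show ?thesis .
qed

lemma Stirling_le_Suc_power_div_fact:
  fixes c N :: nat and y :: real
  assumes "0 < y" "2 * real (Suc c) * ln y \<le> N"
  shows "Stirling N c \<le> real (Suc c) ^ N / fact c / y\<^sup>2"
proof -
  have "real c ^ N = ((real (Suc c) - 1) / real (Suc c)) ^ N * real (Suc c) ^ N"
    by (simp add: power_divide)
  also have "\<dots> \<le> 1 / y\<^sup>2 * real (Suc c) ^ N"
    using power_ratio_le_inverse_square[of "real (Suc c)" y N] assms
    by (intro mult_right_mono) simp_all
  finally have "real c ^ N / fact c \<le> 1 / y\<^sup>2 * real (Suc c) ^ N / fact c"
    by (rule divide_right_mono) simp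
  also have "\<dots> = real (Suc c) ^ N / fact c / y\<^sup>2"
    by simp
  finally show ?thesis
    using Stirling_le_power_div_fact[of N c] by linarith
qed

lemma real_choose_two: "real (b choose 2) = real b * (real b - 1) / 2"
  by (induction b) (simp_all add: numeral_2_eq_2 field_simps)

lemma Stirling_two_term_ge:
  fixes a b m :: nat
  assumes "2 \<le> b" "b < a" "2 * real a * ln (real a + 1) + 2 \<le> real m"
  shows "3 / 4 * b * (real (a - 1) ^ (m - 1) / fact (a - 1))
    \<le> real b * Stirling (m - 1) (a - 1) - real (b choose 2) * Stirling (m - 2) (a - 2)"
proof -
  obtain c where a: "a = Suc (Suc c)"
    using assms by (intro that[of "a - 2"]) simp
  have "0 \<le> 2 * real a * ln (real a + 1)"
    by simp
  then have "2 \<le> m"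
    using assms(3) by linarith
  then obtain N where m: "m = Suc (Suc N)"
    by (intro that[of "m - 2"]) simp
  have "2 * real (Suc c) * ln (real a + 1) \<le> 2 * real a * ln (real a + 1)"
    by (intro mult_right_mono) (simp_all add: a)
  then have N: "2 * real (Suc c) * ln (real a + 1) \<le> N"
    using assms(3) by (simp add: m)
  define X where "X = real (Suc c) ^ Suc N / fact (Suc c)"
  have X: "0 \<le> X" "X = real (Suc c) ^ N / fact c"
    by (simp_all add: X_def)
  have "7 / 8 * X \<le> Stirling (Suc N) (Suc c)"
    unfolding X_def using N Stirling_ge_seven_eighths[of "Suc c" a "Suc N"] by (simp add: a)
  then have s1: "real b * (7 / 8 * X) \<le> real b * Stirling (Suc N) (Suc c)"
    by (rule mult_left_mono) simp
  have "real (b choose 2) \<le> real b * real a / 2"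
    unfolding real_choose_two using assms by (intro divide_right_mono mult_left_mono) simp_all
  then have "real (b choose 2) * Stirling N c \<le> real b * real a / 2 * (X / (real a + 1)\<^sup>2)"
    using Stirling_le_Suc_power_div_fact[of "real a + 1" c N] N X(2)
    by (intro mult_mono) simp_all
  also have "\<dots> = real b * X * (real a / (2 * (real a + 1)\<^sup>2))"
    by (simp add: field_simps)
  also have "\<dots> \<le> real b * X * (1 / 8)"
  proof -
    have "8 * real a \<le> 2 * (real a + 1)\<^sup>2"
      using zero_le_power2[of "real a - 1"] by (simp add: power2_eq_square algebra_simps)
    then show ?thesis
      using X(1) by (intro mult_left_mono) (simp_all add: pos_divide_le_eq)
  qed
  finally show ?thesis
    using s1 by (simp add: a m X_def)
qed

lemma power_ratio_ge_nine_fifths: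
  fixes a b N :: nat
  assumes "2 \<le> b" "b < a" "a * b \<le> N"
  shows "9 / 5 * a * ((real b - 1) * a) ^ N \<le> b * ((real a - 1) * b) ^ N"
proof -
  define u where "u = (real b - 1) * a"
  define x where "x = (real a - b) / u"
  have u: "0 < u" and x: "0 \<le> x"
    using assms by (simp_all add: u_def x_def)
  have "b * (real a - b) / (real b - 1) = real (a * b) * x"
    using assms by (simp add: x_def u_def field_simps)
  also have "\<dots> \<le> N * x"
    using assms(3) x by (intro mult_right_mono) (simp_all only: of_nat_le_iff)
  finally have Nx: "b * (real a - b) / (real b - 1) \<le> N * x" .
  have "9 / 5 * a \<le> b * (1 + b * (real a - b) / (real b - 1))"
  proof -
    have "5 * b * (real b - 1) + 5 * (real b)\<^sup>2 * (real a - b) - 9 * a * (real b - 1)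
        = (real a - b - 1) * (b * (5 * real b - 9) + 9) + ((real b - 5 / 2)\<^sup>2 + 11 / 4)"
      by (simp add: algebra_simps power2_eq_square)
    moreover have "0 \<le> (real a - b - 1) * (b * (5 * real b - 9) + 9)"
      using assms by (intro mult_nonneg_nonneg) simp_all
    moreover have "0 \<le> (real b - 5 / 2)\<^sup>2 + 11 / 4"
      by simp
    ultimately have "9 * a * (real b - 1) \<le> 5 * b * (real b - 1) + 5 * (real b)\<^sup>2 * (real a - b)"
      by linarith
    then show ?thesis
      using assms by (simp add: field_simps power2_eq_square)
  qed
  also have "\<dots> \<le> b * (1 + N * x)"
    using Nx by (intro mult_left_mono) simp_all
  also have "\<dots> \<le> b * (1 + x) ^ N"
    using x by (intro mult_left_mono Bernoulli_inequality) simp_all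
  finally have "9 / 5 * a * u ^ N \<le> b * ((1 + x) * u) ^ N"
    using u by (simp add: power_mult_distrib mult_right_mono)
  moreover have "(1 + x) * u = (real a - 1) * b"
    using u by (simp add: x_def distrib_right) (simp add: u_def algebra_simps)
  ultimately show ?thesis
    by (simp add: u_def)
qed

lemma main_terms_margin:
  fixes a b m :: nat
  assumes "2 \<le> b" "b < a" "a * b < m"
  shows "9 / 5 * a * (real (b - 1) ^ (m - 1) / fact (b - 1)) * (real a ^ m / fact a)
    \<le> b * (real (a - 1) ^ (m - 1) / fact (a - 1)) * (real b ^ m / fact b)"
proof -
  obtain a' b' N where abm: "a = Suc a'" "b = Suc b'" "m = Suc N"
    using assms by (intro that[of "a - 1" "b - 1" "m - 1"]) auto
  define K where "K = fact a' * (fact b' :: real)"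
  have "9 / 5 * a * ((real b - 1) * a) ^ N \<le> b * ((real a - 1) * b) ^ N"
    using assms by (intro power_ratio_ge_nine_fifths) (simp_all add: abm)
  then have "9 / 5 * a * ((real b - 1) * a) ^ N / K \<le> b * ((real a - 1) * b) ^ N / K"
    by (rule divide_right_mono) (simp add: K_def)
  moreover have "9 / 5 * a * (real (b - 1) ^ (m - 1) / fact (b - 1)) * (real a ^ m / fact a)
      = 9 / 5 * a * ((real b - 1) * a) ^ N / K"
    by (simp add: abm K_def power_mult_distrib ac_simps)
  moreover have "b * (real (a - 1) ^ (m - 1) / fact (a - 1)) * (real b ^ m / fact b)
      = b * ((real a - 1) * b) ^ N / K"
    by (simp add: abm K_def power_mult_distrib)
  ultimately show ?thesis
    by simp
qed

lemma Stirling_product_estimate: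
  fixes a b m t :: nat
  assumes "2 \<le> b" "b < a" "a * b < m" "2 * real a * ln (real a + 1) + 2 \<le> real m"
    and "10 * t * fact a \<le> a ^ m"
  shows "real a * Stirling (m - 1) (b - 1) * (Stirling m a + t)
    < (real b * Stirling (m - 1) (a - 1) - real (b choose 2) * Stirling (m - 2) (a - 2)) * Stirling m b"
    (is "_ < ?F * _")
proof -
  define X where "X = real (a - 1) ^ (m - 1) / fact (a - 1)"
  define Y where "Y = real b ^ m / fact b"
  define Z where "Z = real (b - 1) ^ (m - 1) / fact (b - 1)"
  define W where "W = real a ^ m / fact a"
  have pos: "0 < X" "0 < Y" "0 < Z" "0 < W"
    using assms(1,2) by (simp_all add: X_def Y_def Z_def W_def)
  have "2 * real b * ln (real a + 1) \<le> 2 * real a * ln (real a + 1)"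
    using assms(2) by (intro mult_right_mono) simp_all
  then have "2 * real b * ln (real a + 1) \<le> m"
    using assms(4) by linarith
  then have Y_le: "7 / 8 * Y \<le> Stirling m b"
    unfolding Y_def using assms(1,2) by (intro Stirling_ge_seven_eighths) simp_all
  have "real t \<le> W / 10"
    using assms(5) unfolding W_def
    by (simp add: field_simps of_nat_le_iff[where 'a = real, symmetric] del: of_nat_le_iff)
  then have W_ge: "Stirling m a + real t \<le> 11 / 10 * W"
    using Stirling_le_power_div_fact[of m a] by (simp add: W_def)
  have "real a * Stirling (m - 1) (b - 1) * (Stirling m a + t) \<le> real a * Z * (11 / 10 * W)"
    using Stirling_le_power_div_fact[of "m - 1" "b - 1"] W_ge
    by (intro mult_mono) (simp_all add: Z_def)
  also have "\<dots> < 21 / 32 * (9 / 5 * a * Z * W)"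
    using pos assms(2) by simp
  also have "\<dots> \<le> 21 / 32 * (b * X * Y)"
    using main_terms_margin[OF assms(1-3), folded X_def Y_def Z_def W_def] by (simp add: ac_simps)
  also have "\<dots> = (3 / 4 * b * X) * (7 / 8 * Y)"
    by simp
  also have "\<dots> \<le> ?F * Stirling m b"
  proof (rule mult_mono)
    show "3 / 4 * b * X \<le> ?F"
      using Stirling_two_term_ge[OF assms(1,2,4), folded X_def] .
    moreover have "0 \<le> 3 / 4 * b * X"
      using pos(1) by simp
    ultimately show "0 \<le> ?F"
      by linarith
    show "7 / 8 * Y \<le> Stirling m b" "0 \<le> 7 / 8 * Y"
      using Y_le pos(2) by simp_all
  qed
  finally show ?thesis .
qed

section \<open>Bounds for \<^const>\<open>r1\<close>\<close>

lemma r1_eq_stirling_alt_sum: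
  assumes "t \<le> k" "t \<le> l" "l < n"
  shows "r1 n k l t
    = stirling_alt_sum (l - t) (int (n - t)) (int (k - t)) * (int (Stirling (n - t) (l - t)) + int t)"
proof -
  have "S (int n - int t - int j) (int k - int t - int j) = Stirling_int (int (n - t) - int j) (int (k - t) - int j)"
    if "j \<in> {1..l - t}" for j
    using that assms by (subst S_eq_Stirling_int) (auto simp: of_nat_diff)
  moreover have "S (int n - int t) (int l - int t) = int (Stirling (n - t) (l - t))"
    using assms by (subst S_eq_Stirling_int) (simp_all flip: of_nat_diff)
  ultimately show ?thesis
    unfolding r1_def stirling_alt_sum_def by simp
qed

lemma r1_upper_bound:
  assumes "t < l" "l \<le> k" "k < n"
  shows "real_of_int (r1 n l k t)
    \<le> real (k - t) * Stirling (n - t - 1) (l - t - 1) * (Stirling (n - t) (k - t) + t)"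
proof -
  have "stirling_alt_sum (k - t) (int (n - t)) (int (l - t)) \<le> int (k - t) * Stirling (n - t - 1) (l - t - 1)"
    using stirling_alt_sum_le[of "k - t" "int (n - t)" "int (l - t)"] Stirling_int_diff[of 1 "n - t" "l - t"] assms
    by simp
  then have "r1 n l k t \<le> int (k - t) * Stirling (n - t - 1) (l - t - 1) * (Stirling (n - t) (k - t) + t)"
    using assms by (simp add: r1_eq_stirling_alt_sum mult_right_mono)
  then show ?thesis
    by (simp flip: of_int_le_iff[where 'a = real])
qed

lemma r1_lower_bound:
  assumes "t \<le> l" "l < n" "t + 2 \<le> k" "k \<le> n"
  shows "(real (l - t) * Stirling (n - t - 1) (k - t - 1)
      - real ((l - t) choose 2) * Stirling (n - t - 2) (k - t - 2)) * Stirling (n - t) (l - t)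
    \<le> real_of_int (r1 n k l t)"
proof -
  define A where "A = stirling_alt_sum (l - t) (int (n - t)) (int (k - t))"
  have "int (l - t) * Stirling (n - t - 1) (k - t - 1) - int ((l - t) choose 2) * Stirling (n - t - 2) (k - t - 2)
      \<le> A"
    using stirling_alt_sum_ge[of "l - t" "int (n - t)" "int (k - t)"] assms
      Stirling_int_diff[of 1 "n - t" "k - t"] Stirling_int_diff[of 2 "n - t" "k - t"]
    by (simp add: A_def)
  then have "(int (l - t) * Stirling (n - t - 1) (k - t - 1)
      - int ((l - t) choose 2) * Stirling (n - t - 2) (k - t - 2)) * Stirling (n - t) (l - t)
      \<le> A * Stirling (n - t) (l - t)"
    by (rule mult_right_mono) simp
  also have "\<dots> \<le> r1 n k l t"
    using assms stirling_alt_sum_nonneg[of "l - t" "int (n - t)" "int (k - t)"]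
    by (simp add: A_def r1_eq_stirling_alt_sum mult_left_mono)
  finally show ?thesis
    by (simp flip: of_int_le_iff[where 'a = real])
qed

lemma ten_mult_fact_le_power:
  fixes a t m :: nat
  assumes "2 \<le> a" "t + a + 4 \<le> m"
  shows "10 * t * fact a \<le> a ^ m"
proof -
  have "10 * t \<le> 2 ^ (t + 4)"
    using less_exp[of t] by (simp add: power_add del: less_exp)
  also have "\<dots> \<le> a ^ (t + 4)"
    using assms(1) by (rule power_mono) simp
  also have "\<dots> \<le> a ^ (m - a)"
    using assms by (intro power_increasing) simp_all
  finally have "10 * t * fact a \<le> a ^ (m - a) * a ^ a"
    using fact_le_power[of a, where 'a = nat] by (intro mult_mono) simp_all
  also have "\<dots> = a ^ m"
    using assms(2) by (simp flip: power_add)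
  finally show ?thesis .
qed

lemma ln_le_log2: "1 \<le> x \<Longrightarrow> ln x \<le> log 2 x"
proof -
  assume "1 \<le> x"
  then have "ln x * ln 2 \<le> ln x * 1"
    using ln_2_less_1 by (intro mult_left_mono) simp_all
  then show ?thesis
    by (simp add: log_def le_divide_eq)
qed

lemma n_bounds_from_L:
  assumes "t < k" "2 * L k t \<le> real n"
  shows "2 * real (k - t) * ln (real (k - t) + 1) + 2 \<le> real (n - t)"
    and "t + (k - t) + 4 \<le> n - t"
proof -
  define a where "a = k - t"
  define G where "G = (real t + 1) * (real a + 1)"
  define P where "P = (real a + 1) * log 2 G"
  have L: "L k t = real t + 1 + P"
    using assms(1) by (simp add: L_def G_def P_def a_def of_nat_diff)
  have "1 \<le> a"
    using assms(1) by (simp add: a_def)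
  moreover have "real a + 1 \<le> G"
    by (simp add: G_def)
  ultimately have G: "real a + 1 \<le> G" "2 \<le> G"
    by simp_all
  have "ln (real a + 1) \<le> ln G"
    using G by simp
  also have "\<dots> \<le> log 2 G"
    using G by (intro ln_le_log2) simp
  finally have "real a * ln (real a + 1) \<le> P"
    unfolding P_def by (intro mult_mono) simp_all
  then have "2 * real a * ln (real a + 1) + 2 \<le> real n - real t"
    using assms(2) of_nat_0_le_iff[of t, where 'a = real] unfolding L by simp
  moreover have "real a + 1 \<le> P"
    using G mult_left_mono[of 1 "log 2 G" "real a + 1"] by (simp add: P_def)
  then have "real (t + a + 4) \<le> real n - real t"
    using assms(2) unfolding L by simp
  ultimately show "2 * real (k - t) * ln (real (k - t) + 1) + 2 \<le> real (n - t)"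
    and "t + (k - t) + 4 \<le> n - t"
    unfolding a_def by (simp_all add: of_nat_diff)
qed

theorem mainTheorem19:
  fixes n k l t :: nat
  assumes "k > l" and "l \<ge> t + 2"
    and "real n \<ge> 2 * L k t"
    and "n \<ge> t + 1 + (k - t) * (l - t)"
  shows "r1 n k l t > r1 n l k t"
proof -
  define a b m where "a = k - t" and "b = l - t" and "m = n - t"
  have ab: "2 \<le> b" "b < a"
    using assms(1,2) by (simp_all add: a_def b_def)
  have abm: "a * b < m"
    using assms(4) by (simp add: a_def b_def m_def)
  have "k = t + a" "t + 1 + a * b \<le> n"
    using assms(1,2,4) by (simp_all add: a_def b_def)
  moreover have "2 * a \<le> a * b"
    using ab by simp
  ultimately have "k < n"
    by linarith
  have m_bounds: "2 * real a * ln (real a + 1) + 2 \<le> real m" "t + a + 4 \<le> m"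
    using n_bounds_from_L[of t k n] assms(1-3) by (simp_all add: a_def m_def)
  have "real a * Stirling (m - 1) (b - 1) * (Stirling m a + t)
      < (real b * Stirling (m - 1) (a - 1) - real (b choose 2) * Stirling (m - 2) (a - 2)) * Stirling m b"
    using ab abm m_bounds ten_mult_fact_le_power[of a t m] by (intro Stirling_product_estimate) simp_all
  then have "real_of_int (r1 n l k t) < real_of_int (r1 n k l t)"
    using r1_upper_bound[of t l k n, folded a_def b_def m_def] r1_lower_bound[of t l n k, folded a_def b_def m_def]
      assms(1,2) \<open>k < n\<close> by linarith
  then show ?thesis
    by simp
qed

end
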